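(* Let $v_1\ge v_2>0$, $m\in\mathbb{Z}_{\ge1}$ and $0<b<m$. If a strategy profile $(X,Y)$ with $\mathbf{E}(X)=m$ and $\mathbf{E}(Y)=b$ is a Nash equilibrium of the discrete all-pay auction with valuations $v_1,v_2$, then $m=v_2/2$, $(X,Y)$ is a Nash equilibrium of the General Lotto game $\Gamma(m,b)$, and $X=U_{\mathrm{O}}^m$.
   Context: Discrete all-pay auction: two players, 1 and 2, value a prize at $v_1$ and $v_2$ respectively, where $v_1\ge v_2>0$. A (mixed) strategy is a probability distribution on $\mathbb{Z}_{\ge 0}$ with finite mean, identified with a $\mathbb{Z}_{\ge0}$-valued random variable; the two players' choices are independent. If player 1 uses $X$ and player 2 uses $Y$, the expected payoffs are $P^1(X,Y)=v_1\Pr(X>Y)+\frac{v_1}{2}\Pr(X=Y)-\mathbf{E}(X)$ and $P^2(Y,X)=v_2\Pr(Y>X)+\frac{v_2}{2}\Pr(X=Y)-\mathbf{E}(Y)$. A Nash equilibrium of the all-pay auction is a pair $(X,Y)$ with $P^1(X,Y)\ge P^1(X',Y)$ and $P^2(Y,X)\ge P^2(Y',X)$ for all strategies $X',Y'$. Discrete General Lotto game: for reals $a,b\ge 0$, in $\Gamma(a,b)$ player 1 chooses a distribution $X$ on $\mathbb{Z}_{\ge0}$ with $\mathbf{E}(X)=a$ and player 2 chooses a distribution $Y$ on $\mathbb{Z}_{\ge 0}$ with $\mathbf{E}(Y)=b$ (independently); the payoff to player 1 is $H(X,Y)=\Pr(X>Y)-\Pr(X<Y)$ and to player 2 is $H(Y,X)=-H(X,Y)$.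 A Nash equilibrium of $\Gamma(a,b)$ is a pair $(X,Y)$ from these strategy sets such that neither player can increase her payoff by switching to another strategy in her own strategy set. For $m\ge1$, $U_{\mathrm{O}}^m$ is the uniform distribution on $\{1,3,\dots,2m-1\}$. *)

theory Defs
  imports "HOL-Probability.Probability"
begin

definition strategy :: "nat pmf \<Rightarrow> bool" where
  "strategy X \<longleftrightarrow> integrable (measure_pmf X) (\<lambda>n. real n)"

definition mean :: "nat pmf \<Rightarrow> real" where
  "mean X = measure_pmf.expectation X (\<lambda>n. real n)"

definition prob_gt :: "nat pmf \<Rightarrow> nat pmf \<Rightarrow> real" where
  "prob_gt X Y = measure_pmf.prob (pair_pmf X Y) {p. fst p > snd p}"

definition prob_eq :: "nat pmf \<Rightarrow> nat pmf \<Rightarrow> real" where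
  "prob_eq X Y = measure_pmf.prob (pair_pmf X Y) {p. fst p = snd p}"

definition payoff1 :: "real \<Rightarrow> nat pmf \<Rightarrow> nat pmf \<Rightarrow> real" where
  "payoff1 v1 X Y = v1 * prob_gt X Y + v1 / 2 * prob_eq X Y - mean X"

definition payoff2 :: "real \<Rightarrow> nat pmf \<Rightarrow> nat pmf \<Rightarrow> real" where
  "payoff2 v2 Y X = v2 * prob_gt Y X + v2 / 2 * prob_eq X Y - mean Y"

definition allpay_NE :: "real \<Rightarrow> real \<Rightarrow> nat pmf \<Rightarrow> nat pmf \<Rightarrow> bool" where
  "allpay_NE v1 v2 X Y \<longleftrightarrow> strategy X \<and> strategy Y \<and>
     (\<forall>X'. strategy X' \<longrightarrow> payoff1 v1 X' Y \<le> payoff1 v1 X Y) \<and>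
     (\<forall>Y'. strategy Y' \<longrightarrow> payoff2 v2 Y' X \<le> payoff2 v2 Y X)"

definition lotto_H :: "nat pmf \<Rightarrow> nat pmf \<Rightarrow> real" where
  "lotto_H X Y = prob_gt X Y - prob_gt Y X"

definition lotto_NE :: "real \<Rightarrow> real \<Rightarrow> nat pmf \<Rightarrow> nat pmf \<Rightarrow> bool" where
  "lotto_NE a b X Y \<longleftrightarrow>
     strategy X \<and> mean X = a \<and> strategy Y \<and> mean Y = b \<and>
     (\<forall>X'. strategy X' \<and> mean X' = a \<longrightarrow> lotto_H X' Y \<le> lotto_H X Y) \<and>
     (\<forall>Y'. strategy Y' \<and> mean Y' = b \<longrightarrow> lotto_H Y' X \<le> lotto_H Y X)"

definition U_O :: "nat \<Rightarrow> nat pmf" where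
  "U_O m = pmf_of_set ((\<lambda>k. 2 * k + 1) ` {..<m})"

end

theory Submission
  imports Defs
begin

text \<open>Write \<open>w(A,B) = Pr(A > B) + Pr(A = B)/2\<close>; then the all-pay payoffs are \<open>v w - mean\<close>, and
  \<open>w(A,B)\<close> is the \<open>A\<close>-average of the mid-distribution function \<open>F\<^sub>B\<close> of \<open>B\<close>. Since
  \<open>2m F\<^sub>U \<le> id\<close> for \<open>U = U\<^sub>O\<^sup>m\<close>, player 1's deviation to \<open>U\<close> caps player 2's share at \<open>b/(2m)\<close>;
  together with player 2's deviations to the bid \<open>0\<close> and to \<open>X\<close> this forces \<open>v\<^sub>2 = 2m\<close> and a zero
  payoff for player 2. The pure deviations of player 2 then give \<open>2m F\<^sub>X \<le> id\<close>, with equality on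
  the support of \<open>X\<close> because both sides have \<open>X\<close>-mean \<open>m\<close>, and this pins \<open>X\<close> down to \<open>U\<close>.
  As the means are fixed, both players' payoffs are affine in the Lotto payoff \<open>2w - 1\<close>.\<close>

lemma measure_pmf_prob_bind_pmf:
  "measure_pmf.prob (bind_pmf M N) S = (\<integral>x. measure_pmf.prob (N x) S \<partial>measure_pmf M)"
proof -
  have "emeasure (measure_pmf (bind_pmf M N)) S
      = (\<integral>\<^sup>+x. ennreal (measure_pmf.prob (N x) S) \<partial>measure_pmf M)"
    unfolding emeasure_bind_pmf by (simp add: measure_pmf.emeasure_eq_measure)
  also have "\<dots> = ennreal (\<integral>x. measure_pmf.prob (N x) S \<partial>measure_pmf M)"
    by (intro nn_integral_eq_integral measure_pmf.integrable_const_bound[where B=1]) auto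
  finally show ?thesis
    by (simp add: measure_pmf.emeasure_eq_measure integral_nonneg)
qed

lemma measure_pmf_prob_pair_pmf:
  "measure_pmf.prob (pair_pmf A B) S = (\<integral>a. measure_pmf.prob B {b. (a, b) \<in> S} \<partial>measure_pmf A)"
proof -
  have "pair_pmf A B = bind_pmf A (\<lambda>x. map_pmf (Pair x) B)"
    by (simp add: pair_pmf_def map_pmf_def)
  then show ?thesis
    by (simp add: measure_pmf_prob_bind_pmf vimage_def)
qed

lemma measure_pmf_prob_pair_pmf_swap:
  "measure_pmf.prob (pair_pmf B A) S = measure_pmf.prob (pair_pmf A B) ((\<lambda>(x, y). (y, x)) -` S)"
  by (subst pair_commute_pmf) simp

lemma measure_pmf_prob_lessThan_Suc:
  "measure_pmf.prob X {..<Suc j} = measure_pmf.prob X {..<j} + pmf X j"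
proof -
  have "measure_pmf.prob X ({..<j} \<union> {j}) = measure_pmf.prob X {..<j} + measure_pmf.prob X {j}"
    by (rule measure_pmf.finite_measure_Union) auto
  then show ?thesis
    by (simp add: lessThan_Suc measure_pmf_single)
qed

lemma prob_eq_commute: "prob_eq A B = prob_eq B A"
  unfolding prob_eq_def measure_pmf_prob_pair_pmf_swap[of A B]
  by (rule arg_cong[where f="measure_pmf.prob _"]) auto

lemma prob_gt_add_prob_gt_add_prob_eq: "prob_gt A B + prob_gt B A + prob_eq A B = 1"
proof -
  let ?P = "measure_pmf.prob (pair_pmf A B)"
  have gt_swap: "prob_gt B A = ?P {p. fst p < snd p}"
    unfolding prob_gt_def measure_pmf_prob_pair_pmf_swap[of A B]
    by (rule arg_cong[where f="measure_pmf.prob _"]) auto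
  have "?P ({p. fst p > snd p} \<union> {p. fst p < snd p} \<union> {p. fst p = snd p})
      = ?P {p. fst p > snd p} + ?P {p. fst p < snd p} + ?P {p. fst p = snd p}"
    by (subst measure_pmf.finite_measure_Union; auto intro!: measure_pmf.finite_measure_Union)+
  also have "{p. fst p > snd p} \<union> {p. fst p < snd p} \<union> {p. fst p = snd p} = (UNIV :: (nat \<times> nat) set)"
    by auto
  finally show ?thesis
    unfolding gt_swap prob_gt_def[of A B] prob_eq_def by simp
qed

definition mid_cdf :: "nat pmf \<Rightarrow> nat \<Rightarrow> real" where
  "mid_cdf B a = measure_pmf.prob B {..<a} + pmf B a / 2"

definition win_share :: "nat pmf \<Rightarrow> nat pmf \<Rightarrow> real" where
  "win_share A B = prob_gt A B + prob_eq A B / 2"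

lemma mid_cdf_nonneg: "0 \<le> mid_cdf B a"
  unfolding mid_cdf_def by simp

lemma mid_cdf_le_1: "mid_cdf B a \<le> 1"
  unfolding mid_cdf_def
  using measure_pmf.prob_le_1[of B "{..<Suc a}"] measure_pmf_prob_lessThan_Suc[of B a] pmf_nonneg[of B a]
  by linarith

lemma integrable_mid_cdf: "integrable (measure_pmf A) (mid_cdf B)"
  by (intro measure_pmf.integrable_const_bound[where B=1]) (auto simp: mid_cdf_nonneg mid_cdf_le_1)

lemma win_share_eq_integral: "win_share A B = (\<integral>a. mid_cdf B a \<partial>measure_pmf A)"
proof -
  have gt: "prob_gt A B = (\<integral>a. measure_pmf.prob B {..<a} \<partial>measure_pmf A)"
    unfolding prob_gt_def measure_pmf_prob_pair_pmf by (simp add: lessThan_def)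
  have eq: "prob_eq A B = (\<integral>a. pmf B a \<partial>measure_pmf A)"
    unfolding prob_eq_def measure_pmf_prob_pair_pmf
    by (simp add: measure_pmf_single[symmetric] del: measure_pmf_single)
  have "integrable (measure_pmf A) (\<lambda>a. measure_pmf.prob B {..<a})"
       "integrable (measure_pmf A) (pmf B)"
    by (intro measure_pmf.integrable_const_bound[where B=1]; simp add: pmf_le_1)+
  then show ?thesis
    unfolding win_share_def mid_cdf_def gt eq by simp
qed

lemma win_share_add_win_share: "win_share A B + win_share B A = 1"
  using prob_gt_add_prob_gt_add_prob_eq[of A B] prob_eq_commute[of A B]
  unfolding win_share_def by simp

lemma win_share_self: "win_share A A = 1 / 2"
  using win_share_add_win_share[of A A] by simp

lemma win_share_return_pmf: "win_share (return_pmf j) B = mid_cdf B j"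
  unfolding win_share_def mid_cdf_def prob_gt_def prob_eq_def pair_return_pmf1
  by (simp add: vimage_def lessThan_def measure_pmf_single[symmetric] del: measure_pmf_single)

lemma payoff1_eq_win_share: "payoff1 v X Y = v * win_share X Y - mean X"
  unfolding payoff1_def win_share_def by (simp add: algebra_simps)

lemma payoff2_eq_win_share: "payoff2 v Y X = v * win_share Y X - mean Y"
  unfolding payoff2_def win_share_def by (simp add: prob_eq_commute[of X Y] algebra_simps)

lemma lotto_H_eq_win_share: "lotto_H A B = 2 * win_share A B - 1"
  using prob_gt_add_prob_gt_add_prob_eq[of A B]
  unfolding lotto_H_def win_share_def by simp

lemma strategy_return_pmf: "strategy (return_pmf j)"
  unfolding strategy_def by (rule integrable_measure_pmf_finite) simp

lemma mean_return_pmf: "mean (return_pmf j) = real j"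
  unfolding mean_def by simp

lemma win_share_le_mean:
  assumes "strategy A" and "\<And>y. c * mid_cdf B y \<le> real y"
  shows "c * win_share A B \<le> mean A"
proof -
  have "c * win_share A B = (\<integral>a. c * mid_cdf B a \<partial>measure_pmf A)"
    by (simp add: win_share_eq_integral)
  also have "\<dots> \<le> (\<integral>a. real a \<partial>measure_pmf A)"
    using assms integrable_mid_cdf[of A B] unfolding strategy_def
    by (intro integral_mono) auto
  finally show ?thesis
    unfolding mean_def .
qed

lemma mid_cdf_eq_on_support:
  assumes "strategy A" and "\<And>y. c * mid_cdf B y \<le> real y"
    and "c * win_share A B = mean A" and "x \<in> set_pmf A"
  shows "c * mid_cdf B x = real x"
proof -
  have int: "integrable (measure_pmf A) (\<lambda>a. real a - c * mid_cdf B a)"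
    using assms(1) integrable_mid_cdf[of A B] unfolding strategy_def by simp
  have "(\<integral>a. real a - c * mid_cdf B a \<partial>measure_pmf A) = mean A - c * win_share A B"
    using assms(1) integrable_mid_cdf[of A B]
    unfolding strategy_def mean_def win_share_eq_integral by simp
  then have "AE a in measure_pmf A. real a - c * mid_cdf B a = 0"
    using integral_nonneg_eq_0_iff_AE[OF int] assms(2,3) by simp
  then show ?thesis
    using assms(4) by (simp add: AE_measure_pmf_iff)
qed

lemma sum_odd_numbers: "(\<Sum>k<m. real (2 * k + 1)) = real m * real m"
  by (induction m) (auto simp: algebra_simps)

lemma
  assumes "0 < m"
  shows set_pmf_U_O: "set_pmf (U_O m) = (\<lambda>k. 2 * k + 1) ` {..<m}"
    and pmf_U_O: "pmf (U_O m) x = indicator ((\<lambda>k. 2 * k + 1) ` {..<m}) x / real m"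
proof -
  have "card ((\<lambda>k::nat. 2 * k + 1) ` {..<m}) = m"
    by (simp add: card_image inj_on_def)
  moreover have "(\<lambda>k::nat. 2 * k + 1) ` {..<m} \<noteq> {}"
    using assms by auto
  ultimately show "set_pmf (U_O m) = (\<lambda>k. 2 * k + 1) ` {..<m}"
    and "pmf (U_O m) x = indicator ((\<lambda>k. 2 * k + 1) ` {..<m}) x / real m"
    unfolding U_O_def by simp_all
qed

lemma strategy_U_O: "0 < m \<Longrightarrow> strategy (U_O m)"
  unfolding strategy_def by (rule integrable_measure_pmf_finite) (simp add: set_pmf_U_O)

lemma mean_U_O:
  assumes "0 < m"
  shows "mean (U_O m) = real m"
proof -
  have "mean (U_O m) = (\<Sum>x\<in>(\<lambda>k. 2 * k + 1) ` {..<m}. real x * pmf (U_O m) x)"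
    unfolding mean_def using assms
    by (subst integral_measure_pmf[of "(\<lambda>k. 2 * k + 1) ` {..<m}"]) (auto simp: set_pmf_U_O mult.commute)
  also have "\<dots> = (\<Sum>k<m. real (2 * k + 1)) / real m"
    using assms by (subst sum.reindex) (auto simp: inj_on_def pmf_U_O sum_divide_distrib)
  finally show ?thesis
    using assms sum_odd_numbers[of m] by simp
qed

lemma mid_cdf_U_O_le:
  assumes "0 < m"
  shows "2 * real m * mid_cdf (U_O m) y \<le> real y"
proof -
  define S where "S = (\<lambda>k::nat. 2 * k + 1) ` {..<m}"
  have "card (S \<inter> {..<y}) \<le> card ((\<lambda>k::nat. 2 * k + 1) ` {..<y div 2})"
    by (intro card_mono) (auto simp: S_def)
  also have "\<dots> \<le> y div 2"
    using card_image_le[of "{..<y div 2}" "\<lambda>k::nat. 2 * k + 1"] by simp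
  finally have count: "2 * card (S \<inter> {..<y}) + (if y \<in> S then 1 else 0) \<le> y"
    by (auto simp: S_def)
  have "measure_pmf.prob (U_O m) {..<y} = card (S \<inter> {..<y}) / real m"
    using assms measure_pmf_of_set[of S "{..<y}"]
    by (auto simp: U_O_def S_def card_image inj_on_def)
  moreover have "pmf (U_O m) y = (if y \<in> S then 1 else 0) / real m"
    using pmf_U_O[OF assms] by (simp add: S_def)
  ultimately have "2 * real m * mid_cdf (U_O m) y = real (2 * card (S \<inter> {..<y}) + (if y \<in> S then 1 else 0))"
    using assms by (simp add: mid_cdf_def field_simps split: if_splits)
  with count show ?thesis
    by linarith
qed

lemma obtain_next_support_point:
  fixes X :: "nat pmf"
  assumes "measure_pmf.prob X {..<n} < 1"
  obtains x where "x \<in> set_pmf X" and "n \<le> x"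
    and "measure_pmf.prob X {..<x} = measure_pmf.prob X {..<n}"
proof -
  have "\<exists>x. x \<in> set_pmf X \<and> n \<le> x"
  proof (rule ccontr)
    assume "\<not> (\<exists>x. x \<in> set_pmf X \<and> n \<le> x)"
    then have "set_pmf X \<subseteq> {..<n}"
      by auto
    then have "measure_pmf.prob X (UNIV - {..<n}) = 0"
      by (auto simp: measure_pmf_zero_iff)
    then show False
      using assms measure_pmf.prob_compl[of "{..<n}" X] by simp
  qed
  define x where "x = (LEAST x. x \<in> set_pmf X \<and> n \<le> x)"
  have x: "x \<in> set_pmf X \<and> n \<le> x"
    unfolding x_def by (rule LeastI_ex) fact
  have gap: "measure_pmf.prob X {n..<x} = 0"
    unfolding measure_pmf_zero_iff x_def by (auto dest: not_less_Least)
  have "measure_pmf.prob X {..<x} = measure_pmf.prob X ({..<n} \<union> {n..<x})"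
    using x by (intro arg_cong[where f="measure_pmf.prob X"]) auto
  also have "\<dots> = measure_pmf.prob X {..<n}"
    using gap by (subst measure_pmf.finite_measure_Union) auto
  finally show ?thesis
    using that x by blast
qed

text \<open>The next support point \<open>x \<ge> 2i + 1\<close> satisfies \<open>2i + m pmf X x = x\<close>, and comparing this
  with the bound at \<open>x + 1\<close> gives \<open>x \<le> 2i + 1\<close>.\<close>

lemma mid_cdf_tight_step:
  assumes below: "\<And>j. 2 * real m * mid_cdf X j \<le> real j"
    and tight: "\<And>x. x \<in> set_pmf X \<Longrightarrow> 2 * real m * mid_cdf X x = real x"
    and cdf: "measure_pmf.prob X {..<2 * i} = real i / real m" and "i < m"
  shows "pmf X (2 * i) = 0 \<and> pmf X (2 * i + 1) = 1 / real m"
proof -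
  have m: "real m > 0"
    using \<open>i < m\<close> by simp
  have scale: "2 * real m * (real i / real m + p / 2) = 2 * real i + real m * p" for p
    using m by (simp add: field_simps)
  have "real m * pmf X (2 * i) \<le> 0"
    using below[of "2 * i"] cdf scale[of "pmf X (2 * i)"] by (simp add: mid_cdf_def)
  then have even: "pmf X (2 * i) = 0"
    using m by (simp add: mult_le_0_iff order.antisym)
  then have cdf_odd: "measure_pmf.prob X {..<2 * i + 1} = real i / real m"
    using cdf measure_pmf_prob_lessThan_Suc[of X "2 * i"] by simp
  moreover have "real i / real m < 1"
    using \<open>i < m\<close> by simp
  ultimately obtain x where x: "x \<in> set_pmf X" "2 * i + 1 \<le> x"
    and "measure_pmf.prob X {..<x} = measure_pmf.prob X {..<2 * i + 1}"
    by (metis obtain_next_support_point)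
  with cdf_odd have cdf_x: "measure_pmf.prob X {..<x} = real i / real m"
    by simp
  have at_x: "2 * real i + real m * pmf X x = real x"
    using tight[OF x(1)] cdf_x scale[of "pmf X x"] by (simp add: mid_cdf_def)
  have "2 * real i + 2 * (real m * pmf X x) = 2 * real m * (real i / real m + pmf X x)"
    using m by (simp add: field_simps)
  also have "\<dots> \<le> 2 * real m * mid_cdf X (Suc x)"
    using m cdf_x measure_pmf_prob_lessThan_Suc[of X x]
    by (intro mult_left_mono) (auto simp: mid_cdf_def)
  also have "\<dots> \<le> real (Suc x)"
    by (rule below)
  finally have "2 * real i + 2 * (real m * pmf X x) \<le> real x + 1"
    by simp
  with at_x x(2) have "x = 2 * i + 1"
    by linarith
  with at_x m have "pmf X (2 * i + 1) = 1 / real m"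
    by (simp add: field_simps)
  with even show ?thesis
    by simp
qed

lemma eq_U_O_if_mid_cdf_tight:
  assumes "0 < m"
    and below: "\<And>j. 2 * real m * mid_cdf X j \<le> real j"
    and tight: "\<And>x. x \<in> set_pmf X \<Longrightarrow> 2 * real m * mid_cdf X x = real x"
  shows "X = U_O m"
proof -
  have cdf: "measure_pmf.prob X {..<2 * i} = real i / real m" if "i \<le> m" for i
    using that
  proof (induction i)
    case (Suc i)
    then have "pmf X (2 * i) = 0 \<and> pmf X (2 * i + 1) = 1 / real m"
      by (intro mid_cdf_tight_step[OF below tight]) auto
    with Suc measure_pmf_prob_lessThan_Suc[of X "2 * i"] measure_pmf_prob_lessThan_Suc[of X "2 * i + 1"]
    show ?case
      using \<open>0 < m\<close> by (simp add: field_simps)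
  qed simp
  have pairs: "pmf X (2 * k) = 0 \<and> pmf X (2 * k + 1) = 1 / real m" if "k < m" for k
    using that by (intro mid_cdf_tight_step[OF below tight] cdf) auto
  have "measure_pmf.prob X (UNIV - {..<2 * m}) = 0"
    using cdf[of m] \<open>0 < m\<close> measure_pmf.prob_compl[of "{..<2 * m}" X] by simp
  then have beyond: "pmf X x = 0" if "2 * m \<le> x" for x
    using that by (auto simp: measure_pmf_zero_iff pmf_eq_0_set_pmf)
  show ?thesis
  proof (rule pmf_eqI)
    fix x
    show "pmf X x = pmf (U_O m) x"
    proof (cases "x < 2 * m")
      case True
      then have "x div 2 < m" and "x = 2 * (x div 2) + x mod 2"
        by auto
      then show ?thesis
        using pairs[of "x div 2"] \<open>0 < m\<close>
        by (cases "even x") (auto simp: pmf_U_O indicator_def elim!: oddE)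
    next
      case False
      then show ?thesis
        using beyond \<open>0 < m\<close> by (auto simp: pmf_U_O indicator_def)
    qed
  qed
qed

lemma allpay_NE_valuation_and_payoff2:
  assumes "allpay_NE v1 v2 X Y" and "v1 > 0" and "v2 > 0"
    and "0 < b" and "b < real m" and "mean X = real m" and "mean Y = b"
  shows "v2 = 2 * real m \<and> payoff2 v2 Y X = 0"
proof -
  from assms(1) have sX: "strategy X" and sY: "strategy Y"
    and NE1: "\<And>X'. strategy X' \<Longrightarrow> payoff1 v1 X' Y \<le> payoff1 v1 X Y"
    and NE2: "\<And>Y'. strategy Y' \<Longrightarrow> payoff2 v2 Y' X \<le> payoff2 v2 Y X"
    unfolding allpay_NE_def by auto
  have "0 < m"
    using assms(4,5) by simp
  define s where "s = win_share Y X"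
  have "win_share (U_O m) Y \<le> win_share X Y"
    using NE1[OF strategy_U_O[OF \<open>0 < m\<close>]] assms(2,6) mean_U_O[OF \<open>0 < m\<close>]
    by (simp add: payoff1_eq_win_share)
  then have "s \<le> win_share Y (U_O m)"
    using win_share_add_win_share[of X Y] win_share_add_win_share[of "U_O m" Y]
    unfolding s_def by linarith
  then have "2 * real m * s \<le> 2 * real m * win_share Y (U_O m)"
    by (intro mult_left_mono) auto
  also have "\<dots> \<le> b"
    using win_share_le_mean[OF sY mid_cdf_U_O_le[OF \<open>0 < m\<close>]] assms(7) by simp
  finally have share: "2 * real m * s \<le> b" .
  have payoff: "payoff2 v2 Y X = v2 * s - b"
    unfolding s_def payoff2_eq_win_share assms(7) ..
  have bid_zero: "0 \<le> v2 * s - b"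
    using NE2[OF strategy_return_pmf[of 0]] mult_nonneg_nonneg[OF _ mid_cdf_nonneg, of v2 X 0] assms(3)
    by (simp add: payoff2_eq_win_share[of v2 "return_pmf 0"] win_share_return_pmf mean_return_pmf payoff)
  have copy_X: "v2 / 2 - real m \<le> v2 * s - b"
    using NE2[OF sX] by (simp add: payoff2_eq_win_share[of v2 X X] win_share_self assms(6) payoff)
  have "0 < v2 * s"
    using assms(4) bid_zero by linarith
  then have s_pos: "0 < s"
    using assms(3) by (simp add: zero_less_mult_iff)
  have "2 * real m * s < real m"
    using share assms(5) by linarith
  then have s_half: "s < 1 / 2"
    using \<open>0 < m\<close> by simp
  have "0 \<le> (v2 - 2 * real m) * s"
    using share bid_zero by (simp add: algebra_simps)
  then have v2_ge: "2 * real m \<le> v2"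
    using s_pos by (simp add: zero_le_mult_iff)
  have "(v2 - 2 * real m) * (1 / 2 - s) \<le> 0"
    using share copy_X by (simp add: algebra_simps)
  then have "v2 \<le> 2 * real m"
    using s_half by (simp add: mult_le_0_iff)
  with v2_ge have "v2 = 2 * real m"
    by linarith
  with share bid_zero payoff show ?thesis
    by simp
qed

lemma lotto_NE_if_allpay_NE:
  assumes "allpay_NE v1 v2 X Y" and "v1 > 0" and "v2 > 0"
  shows "lotto_NE (mean X) (mean Y) X Y"
proof -
  have "win_share X' Y \<le> win_share X Y" if "strategy X'" "mean X' = mean X" for X'
    using assms(1,2) that unfolding allpay_NE_def payoff1_eq_win_share by auto
  moreover have "win_share Y' X \<le> win_share Y X" if "strategy Y'" "mean Y' = mean Y" for Y'
    using assms(1,3) that unfolding allpay_NE_def payoff2_eq_win_share by auto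
  ultimately show ?thesis
    using assms(1) unfolding lotto_NE_def allpay_NE_def lotto_H_eq_win_share by auto
qed

theorem lemma1:
  fixes v1 v2 b :: real and m :: nat and X Y :: "nat pmf"
  assumes "v1 \<ge> v2" and "v2 > 0" and "m \<ge> 1"
    and "0 < b" and "b < real m"
    and "mean X = real m" and "mean Y = b"
    and "allpay_NE v1 v2 X Y"
  shows "real m = v2 / 2 \<and> lotto_NE (real m) b X Y \<and> X = U_O m"
proof -
  have "v1 > 0"
    using assms(1,2) by linarith
  with assms have v2: "v2 = 2 * real m" and payoff0: "payoff2 v2 Y X = 0"
    using allpay_NE_valuation_and_payoff2 by blast+
  have sX: "strategy X" and NE2: "\<And>Y'. strategy Y' \<Longrightarrow> payoff2 v2 Y' X \<le> payoff2 v2 Y X"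
    using assms(8) unfolding allpay_NE_def by auto
  have below: "2 * real m * mid_cdf X j \<le> real j" for j
    using NE2[OF strategy_return_pmf[of j]] v2 payoff0
    by (simp add: payoff2_eq_win_share win_share_return_pmf mean_return_pmf)
  have "2 * real m * win_share X X = mean X"
    by (simp add: win_share_self assms(6))
  then have "X = U_O m"
    using assms(3) below mid_cdf_eq_on_support[OF sX below]
    by (intro eq_U_O_if_mid_cdf_tight) auto
  moreover have "lotto_NE (real m) b X Y"
    using lotto_NE_if_allpay_NE[OF assms(8) \<open>v1 > 0\<close> assms(2)] assms(6,7) by simp
  ultimately show ?thesis
    using v2 by simp
qed

end
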